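(* Let $(G,X,\Gamma)$ be a $(\mu,\nu)$-path system group containing a $\delta$-constricting element $(g,A)$ with $\delta$-constricting map $\pi_A\colon X\to A$. There exists $\theta\ge0$ such that for all $x,x'\in X$ and all $m\in\mathbb Z$, $$d_A(x,g^mx')\ge |m|\,[g]^\infty-d_A(x,x')-\theta.$$
   Context: A path is a rectifiable continuous map $\alpha\colon[a,b]\to X$ parametrised by arc length; it is a $(\kappa,\lambda)$-quasi-geodesic if $d(\alpha(t),\alpha(t'))\le|t-t'|\le\kappa d(\alpha(t),\alpha(t'))+\lambda$. A $(\mu,\nu)$-path system group $(G,X,\Gamma)$ is a group $G$ acting properly by isometries on a geodesic metric space $X$ together with a $G$-invariant collection $\Gamma$ of paths closed under subpaths, such that any two points are joined by an element of $\Gamma$ and every element is a $(\mu,\nu)$-quasi-geodesic. A map $\pi_A\colon X\to A$ is $\delta$-constricting if (CS1) $d(x,\pi_A(x))\le\delta$ for $x\in A$, and (CS2) for all $x,y\in X$ and $\gamma\in\Gamma$ joining them, if $d(\pi_A(x),\pi_A(y))>\delta$ then $\gamma$ meets $B_X(\pi_A(x),\delta)$ and $B_X(\pi_A(y),\delta)$. An element $g$ is $\delta$-constricting, written $(g,A)$, if it has infinite order and $A$ is a $\langle g\rangle$-invariant subset with a $\delta$-constricting map $\pi_A$, on which $\langle g\rangle$ acts $\delta$-coboundedly. $d_A(x,y)=d(\pi_A(x),\pi_A(y))$. The asymptotic translation length is $[g]^\infty=\limsup_{m\to\infty}\frac1m d(o,g^mo)$ for any $o\in X$. *)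

theory Defs
  imports "HOL-Analysis.Analysis" "HOL-Algebra.Group_Action"
begin

text \<open>A path is represented as a triple (a, b, alpha) with a \<le> b, alpha restricted to [a,b].\<close>
type_synonym 'x rpath = "real \<times> real \<times> (real \<Rightarrow> 'x)"

definition curve_length :: "(real \<Rightarrow> 'x::metric_space) \<Rightarrow> real \<Rightarrow> real \<Rightarrow> ereal" where
  "curve_length \<alpha> s t =
     (SUP np \<in> {(n::nat, p::nat \<Rightarrow> real). p 0 = s \<and> p n = t \<and> (\<forall>i<n. p i \<le> p (Suc i))}.
        ereal (\<Sum>i<fst np. dist (\<alpha> (snd np i)) (\<alpha> (snd np (Suc i)))))"

definition is_path :: "'x::metric_space rpath \<Rightarrow> bool" where
  "is_path P = (case P of (a, b, \<alpha>) \<Rightarrow>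
      a \<le> b \<and> continuous_on {a..b} \<alpha> \<and> curve_length \<alpha> a b < \<infinity> \<and>
      (\<forall>s t. a \<le> s \<longrightarrow> s \<le> t \<longrightarrow> t \<le> b \<longrightarrow> curve_length \<alpha> s t = ereal (t - s)))"

definition quasi_geodesic :: "real \<Rightarrow> real \<Rightarrow> 'x::metric_space rpath \<Rightarrow> bool" where
  "quasi_geodesic k l P = (case P of (a, b, \<alpha>) \<Rightarrow> is_path P \<and>
      (\<forall>t\<in>{a..b}. \<forall>t'\<in>{a..b}. dist (\<alpha> t) (\<alpha> t') \<le> \<bar>t - t'\<bar> \<and>
                                \<bar>t - t'\<bar> \<le> k * dist (\<alpha> t) (\<alpha> t') + l))"

definition joins :: "'x rpath \<Rightarrow> 'x \<Rightarrow> 'x \<Rightarrow> bool" where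
  "joins P x y = (case P of (a, b, \<alpha>) \<Rightarrow> \<alpha> a = x \<and> \<alpha> b = y)"

definition meets :: "'x rpath \<Rightarrow> 'x set \<Rightarrow> bool" where
  "meets P S = (case P of (a, b, \<alpha>) \<Rightarrow> (\<exists>t\<in>{a..b}. \<alpha> t \<in> S))"

definition geodesic_space :: "'x::metric_space itself \<Rightarrow> bool" where
  "geodesic_space _ = (\<forall>x y::'x. \<exists>\<gamma>::real \<Rightarrow> 'x. \<gamma> 0 = x \<and> \<gamma> (dist x y) = y \<and>
      (\<forall>s\<in>{0..dist x y}. \<forall>t\<in>{0..dist x y}. dist (\<gamma> s) (\<gamma> t) = \<bar>s - t\<bar>))"

definition proper_isometric_action :: "('g, 'b) monoid_scheme \<Rightarrow> ('g \<Rightarrow> 'x::metric_space \<Rightarrow> 'x) \<Rightarrow> bool" where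
  "proper_isometric_action G \<phi> =
     (group_action G (UNIV :: 'x set) \<phi> \<and>
      (\<forall>g\<in>carrier G. \<forall>x y. dist (\<phi> g x) (\<phi> g y) = dist x y) \<and>
      (\<forall>B::'x set. bounded B \<longrightarrow> finite {g \<in> carrier G. \<phi> g ` B \<inter> B \<noteq> {}}))"

definition path_system_group ::
  "real \<Rightarrow> real \<Rightarrow> ('g, 'b) monoid_scheme \<Rightarrow> ('g \<Rightarrow> 'x::metric_space \<Rightarrow> 'x) \<Rightarrow> 'x rpath set \<Rightarrow> bool" where
  "path_system_group \<mu> \<nu> G \<phi> \<Gamma> =
     (geodesic_space TYPE('x) \<and> proper_isometric_action G \<phi> \<and>
      (\<forall>g\<in>carrier G. \<forall>(a, b, \<alpha>)\<in>\<Gamma>. (a, b, \<phi> g \<circ> \<alpha>) \<in> \<Gamma>) \<and>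
      (\<forall>(a, b, \<alpha>)\<in>\<Gamma>. \<forall>s t. a \<le> s \<longrightarrow> s \<le> t \<longrightarrow> t \<le> b \<longrightarrow> (s, t, \<alpha>) \<in> \<Gamma>) \<and>
      (\<forall>x y. \<exists>P\<in>\<Gamma>. joins P x y) \<and>
      (\<forall>P\<in>\<Gamma>. quasi_geodesic \<mu> \<nu> P))"

definition constricting_map ::
  "'x rpath set \<Rightarrow> real \<Rightarrow> 'x::metric_space set \<Rightarrow> ('x \<Rightarrow> 'x) \<Rightarrow> bool" where
  "constricting_map \<Gamma> \<delta> A \<pi> =
     ((\<forall>x. \<pi> x \<in> A) \<and>
      (\<forall>x\<in>A. dist x (\<pi> x) \<le> \<delta>) \<and>
      (\<forall>x y. \<forall>P\<in>\<Gamma>. joins P x y \<longrightarrow> dist (\<pi> x) (\<pi> y) > \<delta> \<longrightarrow>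
          meets P (cball (\<pi> x) \<delta>) \<and> meets P (cball (\<pi> y) \<delta>)))"

definition constricting_element ::
  "('g, 'b) monoid_scheme \<Rightarrow> ('g \<Rightarrow> 'x::metric_space \<Rightarrow> 'x) \<Rightarrow> 'x rpath set \<Rightarrow> real \<Rightarrow>
   'g \<Rightarrow> 'x set \<Rightarrow> ('x \<Rightarrow> 'x) \<Rightarrow> bool" where
  "constricting_element G \<phi> \<Gamma> \<delta> g A \<pi> =
     (g \<in> carrier G \<and> (\<forall>n::nat. n > 0 \<longrightarrow> g [^]\<^bsub>G\<^esub> n \<noteq> \<one>\<^bsub>G\<^esub>) \<and>
      (\<forall>m::int. \<phi> (g [^]\<^bsub>G\<^esub> m) ` A = A) \<and>
      constricting_map \<Gamma> \<delta> A \<pi> \<and>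
      (\<exists>a\<in>A. \<forall>y\<in>A. \<exists>m::int. dist (\<phi> (g [^]\<^bsub>G\<^esub> m) a) y \<le> \<delta>))"

definition proj_dist :: "('x \<Rightarrow> 'x::metric_space) \<Rightarrow> 'x \<Rightarrow> 'x \<Rightarrow> real" where
  "proj_dist \<pi> x y = dist (\<pi> x) (\<pi> y)"

definition asymp_transl :: "('g, 'b) monoid_scheme \<Rightarrow> ('g \<Rightarrow> 'x::metric_space \<Rightarrow> 'x) \<Rightarrow> 'g \<Rightarrow> 'x \<Rightarrow> ereal" where
  "asymp_transl G \<phi> g x0 =
     limsup (\<lambda>m::nat. ereal (dist x0 (\<phi> (g [^]\<^bsub>G\<^esub> m) x0) / real m))"

end

theory Submission
  imports Defs
begin

text \<open>Conjugating \<open>\<pi>\<^sub>A\<close> by the isometry \<open>g\<^sup>m\<close>, which preserves \<open>A\<close> and \<open>\<Gamma>\<close>, gives another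
  \<open>\<delta>\<close>-constricting map onto \<open>A\<close>, and any two \<open>\<delta>\<close>-constricting maps onto the same set are
  uniformly close. Hence \<open>\<pi>\<^sub>A(g\<^sup>m x')\<close> lies within a constant \<open>\<theta>\<close> of \<open>g\<^sup>m \<pi>\<^sub>A(x')\<close>, and the
  triangle inequality bounds \<open>d\<^sub>A(x, g\<^sup>m x')\<close> below by \<open>d(\<pi>\<^sub>A x', g\<^sup>m \<pi>\<^sub>A x') - d\<^sub>A(x, x') - \<theta>\<close>.
  Finally, subadditivity of \<open>n \<mapsto> d(z, g\<^sup>n z)\<close> gives \<open>|m| [g]\<^sup>\<infinity> \<le> d(z, g\<^sup>m z)\<close> for every \<open>z\<close>.\<close>

lemma dist_triangle4: "dist a d \<le> dist a b + dist b c + dist c d"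
  using dist_triangle[of a d b] dist_triangle[of b d c] by linarith

lemma constricting_map_nonneg:
  assumes "constricting_map \<Gamma> \<delta> A \<pi>"
  shows "\<delta> \<ge> 0"
  using assms unfolding constricting_map_def by (meson order_trans zero_le_dist)

lemma constricting_map_isometry_conj:
  assumes cp: "constricting_map \<Gamma> \<delta> A \<pi>"
    and isom: "\<And>x y. dist (f x) (f y) = dist x y"
    and f_f': "\<And>x. f (f' x) = x" and f'_f: "\<And>x. f' (f x) = x"
    and fA: "f ` A = A"
    and \<Gamma>_inv: "\<And>a b \<alpha>. (a, b, \<alpha>) \<in> \<Gamma> \<Longrightarrow> (a, b, f' \<circ> \<alpha>) \<in> \<Gamma>"
  shows "constricting_map \<Gamma> \<delta> A (f \<circ> \<pi> \<circ> f')"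
proof -
  note cpd = cp[unfolded constricting_map_def]
  have dist_f: "dist (f y) x = dist y (f' x)" for x y
    by (metis isom f_f')
  have into_A: "(f \<circ> \<pi> \<circ> f') x \<in> A" for x
    using cpd fA by auto
  have near_on_A: "dist x ((f \<circ> \<pi> \<circ> f') x) \<le> \<delta>" if "x \<in> A" for x
  proof -
    have "f' x \<in> A" using that fA f'_f by (metis imageE)
    then have "dist (f' x) (\<pi> (f' x)) \<le> \<delta>" using cpd by simp
    moreover have "dist x (f (\<pi> (f' x))) = dist (f' x) (\<pi> (f' x))"
      by (subst dist_commute, subst dist_f, rule dist_commute)
    ultimately show ?thesis by simp
  qed
  have meets_balls: "meets P (cball ((f \<circ> \<pi> \<circ> f') u) \<delta>)"
    if P: "P \<in> \<Gamma>" "joins P x y" and far: "dist ((f \<circ> \<pi> \<circ> f') x) ((f \<circ> \<pi> \<circ> f') y) > \<delta>"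
      and u: "u \<in> {x, y}" for x y u P
  proof -
    obtain a b \<alpha> where P_eq: "P = (a, b, \<alpha>)" by (cases P) auto
    have "meets (a, b, f' \<circ> \<alpha>) (cball (\<pi> (f' u)) \<delta>)"
      using cpd \<Gamma>_inv[of a b \<alpha>] P far u unfolding P_eq joins_def by (auto simp: isom)
    then show ?thesis
      unfolding P_eq meets_def by (auto simp: dist_f)
  qed
  show ?thesis
    unfolding constricting_map_def using into_A near_on_A meets_balls by blast
qed

locale path_system =
  fixes \<Gamma> :: "'x::metric_space rpath set" and \<mu> \<nu> :: real
  assumes quasi_geodesic: "P \<in> \<Gamma> \<Longrightarrow> quasi_geodesic \<mu> \<nu> P"
    and subpath: "(a, b, \<alpha>) \<in> \<Gamma> \<Longrightarrow> a \<le> s \<Longrightarrow> s \<le> t \<Longrightarrow> t \<le> b \<Longrightarrow> (s, t, \<alpha>) \<in> \<Gamma>"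
    and joined: "\<exists>P\<in>\<Gamma>. joins P x y"
begin

lemma dist_within_path_le:
  assumes P: "(a, b, \<alpha>) \<in> \<Gamma>" and "a \<le> u" "v \<le> b"
    and "t \<in> {u..v}" "t' \<in> {u..v}" and ends: "dist (\<alpha> u) (\<alpha> v) \<le> r"
  shows "dist (\<alpha> t) (\<alpha> t') \<le> \<bar>\<mu>\<bar> * r + \<bar>\<nu>\<bar>"
proof -
  have qg: "\<forall>s\<in>{a..b}. \<forall>s'\<in>{a..b}. dist (\<alpha> s) (\<alpha> s') \<le> \<bar>s - s'\<bar> \<and>
              \<bar>s - s'\<bar> \<le> \<mu> * dist (\<alpha> s) (\<alpha> s') + \<nu>"
    using quasi_geodesic[OF P] unfolding quasi_geodesic_def by simp
  have in_ab: "t \<in> {a..b}" "t' \<in> {a..b}" "u \<in> {a..b}" "v \<in> {a..b}"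
    using assms(2-5) by auto
  have "dist (\<alpha> t) (\<alpha> t') \<le> \<bar>t - t'\<bar>"
    using qg in_ab by blast
  also have "\<dots> \<le> \<bar>u - v\<bar>"
    using assms(4,5) by auto
  also have "\<dots> \<le> \<mu> * dist (\<alpha> u) (\<alpha> v) + \<nu>"
    using qg in_ab by blast
  also have "\<mu> * dist (\<alpha> u) (\<alpha> v) \<le> \<bar>\<mu>\<bar> * dist (\<alpha> u) (\<alpha> v)"
    by (simp add: mult_right_mono)
  also have "\<dots> \<le> \<bar>\<mu>\<bar> * r"
    using ends by (simp add: mult_left_mono)
  finally show ?thesis by linarith
qed

lemma constricting_map_coarse_lipschitz:
  assumes cp: "constricting_map \<Gamma> \<delta> A \<pi>" and close: "dist w p \<le> \<delta>"
  shows "dist (\<pi> w) (\<pi> p) \<le> (\<bar>\<mu>\<bar> + 2) * \<delta> + \<bar>\<nu>\<bar>"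
proof (cases "dist (\<pi> w) (\<pi> p) > \<delta>")
  case False
  moreover have "0 \<le> \<bar>\<mu>\<bar> * \<delta>" "0 \<le> \<delta>"
    using constricting_map_nonneg[OF cp] by simp_all
  ultimately show ?thesis unfolding distrib_right by linarith
next
  case True
  obtain a b \<alpha> where P: "(a, b, \<alpha>) \<in> \<Gamma>" "\<alpha> a = w" "\<alpha> b = p"
    using joined[of w p] unfolding joins_def by auto
  then have "meets (a, b, \<alpha>) (cball (\<pi> w) \<delta>) \<and> meets (a, b, \<alpha>) (cball (\<pi> p) \<delta>)"
    using cp True unfolding constricting_map_def joins_def by blast
  then obtain t t' where t: "t \<in> {a..b}" "t' \<in> {a..b}"
      and near: "dist (\<pi> w) (\<alpha> t) \<le> \<delta>" "dist (\<pi> p) (\<alpha> t') \<le> \<delta>"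
    unfolding meets_def by auto
  have "dist (\<alpha> t) (\<alpha> t') \<le> \<bar>\<mu>\<bar> * \<delta> + \<bar>\<nu>\<bar>"
    using dist_within_path_le[OF P(1) order_refl order_refl t] P(2,3) close by simp
  then have "dist (\<pi> w) (\<pi> p) \<le> \<bar>\<mu>\<bar> * \<delta> + \<bar>\<nu>\<bar> + 2 * \<delta>"
    using dist_triangle[of "\<pi> w" "\<pi> p" "\<alpha> t"] dist_triangle[of "\<alpha> t" "\<pi> p" "\<alpha> t'"]
      near dist_commute[of "\<pi> p" "\<alpha> t'"] by linarith
  then show ?thesis by (simp add: distrib_right)
qed

lemma constricting_maps_close:
  assumes cp: "constricting_map \<Gamma> \<delta> A \<pi>" and cq: "constricting_map \<Gamma> \<delta> A \<psi>"
  shows "dist (\<pi> z) (\<psi> z) \<le> (\<bar>\<mu>\<bar> + 4) * \<delta> + \<bar>\<nu>\<bar>"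
proof -
  define p q where "p = \<pi> z" and "q = \<psi> z"
  have \<delta>_nonneg: "0 \<le> \<delta>" "0 \<le> \<bar>\<mu>\<bar> * \<delta>"
    using constricting_map_nonneg[OF cp] by simp_all
  note cpd = cp[unfolded constricting_map_def] and cqd = cq[unfolded constricting_map_def]
  have "dist p q \<le> \<bar>\<mu>\<bar> * \<delta> + \<bar>\<nu>\<bar> + 4 * \<delta>"
  proof (cases "dist p (\<pi> q) \<le> \<delta>")
    case True
    have "dist q (\<pi> q) \<le> \<delta>" using cqd cpd q_def by blast
    then show ?thesis
      using True dist_triangle[of p q "\<pi> q"] dist_commute[of q "\<pi> q"] \<delta>_nonneg abs_ge_zero[of \<nu>]
      by linarith
  next
    case False
    obtain a b \<alpha> where P: "(a, b, \<alpha>) \<in> \<Gamma>" "\<alpha> a = z" "\<alpha> b = q"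
      using joined[of z q] unfolding joins_def by auto
    then have "meets (a, b, \<alpha>) (cball p \<delta>)"
      using cpd False unfolding p_def joins_def by auto
    then obtain s where s: "s \<in> {a..b}" "dist p (\<alpha> s) \<le> \<delta>"
      unfolding meets_def by auto
    have initial: "(a, s, \<alpha>) \<in> \<Gamma>" "joins (a, s, \<alpha>) z (\<alpha> s)"
      using subpath[OF P(1)] s(1) P(2) unfolding joins_def by auto
    show ?thesis
    proof (cases "dist q (\<psi> (\<alpha> s)) > \<delta>")
      case True
      then have "meets (a, s, \<alpha>) (cball q \<delta>)"
        using cqd initial unfolding q_def by blast
      then obtain t where t: "t \<in> {a..s}" "dist q (\<alpha> t) \<le> \<delta>"
        unfolding meets_def by auto
      have "dist (\<alpha> s) (\<alpha> t) \<le> \<bar>\<mu>\<bar> * \<delta> + \<bar>\<nu>\<bar>"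
        using dist_within_path_le[OF P(1), of t b s t \<delta>] t s P(3) by (simp add: dist_commute)
      then show ?thesis
        using dist_triangle4[of p q "\<alpha> s" "\<alpha> t"] s(2) t(2) dist_commute[of q "\<alpha> t"] \<delta>_nonneg
        by linarith
    next
      case False
      have "dist (\<psi> (\<alpha> s)) (\<psi> p) \<le> (\<bar>\<mu>\<bar> + 2) * \<delta> + \<bar>\<nu>\<bar>"
        using constricting_map_coarse_lipschitz[OF cq] s(2) by (simp add: dist_commute)
      moreover have "dist p (\<psi> p) \<le> \<delta>" using cqd cpd p_def by blast
      ultimately show ?thesis
        using dist_triangle4[of q p "\<psi> (\<alpha> s)" "\<psi> p"] False dist_commute[of p "\<psi> p"] dist_commute[of p q]
        unfolding distrib_right by linarith
    qed
  qed
  then show ?thesis unfolding p_def q_def distrib_right by linarith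
qed

end

context
  fixes f :: "'x::metric_space \<Rightarrow> 'x"
  assumes isometry: "\<And>x y. dist (f x) (f y) = dist x y"
begin

lemma dist_funpow: "dist ((f ^^ n) x) ((f ^^ n) y) = dist x y"
  by (induction n) (simp_all add: isometry)

lemma dist_funpow_add: "dist z ((f ^^ (a + b)) z) \<le> dist z ((f ^^ a) z) + dist z ((f ^^ b) z)"
proof -
  have "dist z ((f ^^ (a + b)) z) \<le> dist z ((f ^^ a) z) + dist ((f ^^ a) z) ((f ^^ a) ((f ^^ b) z))"
    by (simp add: funpow_add dist_triangle)
  then show ?thesis by (simp add: dist_funpow)
qed

lemma dist_funpow_mult: "dist z ((f ^^ (q * n)) z) \<le> real q * dist z ((f ^^ n) z)"
proof (induction q)
  case (Suc q)
  have "dist z ((f ^^ (n + q * n)) z) \<le> dist z ((f ^^ n) z) + dist z ((f ^^ (q * n)) z)"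
    by (rule dist_funpow_add)
  with Suc show ?case by (simp add: algebra_simps)
qed simp

lemma dist_funpow_le_linear:
  assumes "n > 0"
  shows "dist x ((f ^^ k) x)
    \<le> 2 * dist x z + (\<Sum>r<n. dist z ((f ^^ r) z)) + real k * (dist z ((f ^^ n) z) / real n)"
proof -
  define D where "D = dist z ((f ^^ n) z)"
  have "dist z ((f ^^ k) z) \<le> dist z ((f ^^ (k div n * n)) z) + dist z ((f ^^ (k mod n)) z)"
    using dist_funpow_add[where a = "k div n * n" and b = "k mod n"] by simp
  also have "dist z ((f ^^ (k div n * n)) z) \<le> real (k div n) * D"
    unfolding D_def by (rule dist_funpow_mult)
  also have "\<dots> \<le> real k * (D / real n)"
    using mult_right_mono[OF of_nat_div_le_of_nat[of k n], of D] by (simp add: D_def)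
  also have "dist z ((f ^^ (k mod n)) z) \<le> (\<Sum>r<n. dist z ((f ^^ r) z))"
    by (rule member_le_sum) (use assms in auto)
  finally have "dist z ((f ^^ k) z) \<le> real k * (D / real n) + (\<Sum>r<n. dist z ((f ^^ r) z))"
    by simp
  moreover have "dist x ((f ^^ k) x) \<le> dist x z + dist z ((f ^^ k) z) + dist ((f ^^ k) z) ((f ^^ k) x)"
    by (rule dist_triangle4)
  ultimately show ?thesis
    by (simp add: D_def dist_funpow dist_commute)
qed

lemma limsup_dist_funpow_le:
  assumes n: "n > 0"
  shows "limsup (\<lambda>k. ereal (dist x ((f ^^ k) x) / real k)) \<le> ereal (dist z ((f ^^ n) z) / real n)"
proof -
  define K where "K = 2 * dist x z + (\<Sum>r<n. dist z ((f ^^ r) z))"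
  define \<tau> where "\<tau> = dist z ((f ^^ n) z) / real n"
  have "dist x ((f ^^ k) x) / real k \<le> K / real k + \<tau>" if "k \<ge> 1" for k
    using dist_funpow_le_linear[OF n, of x k z] that
    by (simp add: K_def \<tau>_def divide_simps algebra_simps)
  then have "limsup (\<lambda>k. ereal (dist x ((f ^^ k) x) / real k)) \<le> limsup (\<lambda>k. ereal (K / real k + \<tau>))"
    by (intro Limsup_mono) (auto simp: eventually_sequentially intro!: exI[of _ 1])
  also have "\<dots> = ereal \<tau>"
  proof (rule lim_imp_Limsup)
    have "(\<lambda>k. K / real k + \<tau>) \<longlonglongrightarrow> 0 + \<tau>"
      by (intro tendsto_add lim_const_over_n tendsto_const)
    then show "(\<lambda>k. ereal (K / real k + \<tau>)) \<longlonglongrightarrow> ereal \<tau>"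
      by (simp add: tendsto_ereal)
  qed simp
  finally show ?thesis unfolding \<tau>_def .
qed

end

locale isometric_action = group_action G UNIV \<phi>
  for G :: "('g, 'b) monoid_scheme" (structure) and \<phi> :: "'g \<Rightarrow> 'x::metric_space \<Rightarrow> 'x" +
  assumes dist_act: "h \<in> carrier G \<Longrightarrow> dist (\<phi> h x) (\<phi> h y) = dist x y"
begin

sublocale group G
  using group_hom group_hom.axioms(1) by blast

lemma act_inv_act: "h \<in> carrier G \<Longrightarrow> \<phi> (inv h) (\<phi> h x) = x"
  using orbit_sym_aux by blast

lemma act_act_inv: "h \<in> carrier G \<Longrightarrow> \<phi> h (\<phi> (inv h) x) = x"
  using orbit_sym_aux[of "inv h"] by simp

lemma act_nat_pow: "g \<in> carrier G \<Longrightarrow> \<phi> (g [^] (n::nat)) = \<phi> g ^^ n"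
proof (induction n)
  case 0
  show ?case using id_eq_one by (auto simp: fun_eq_iff dest: fun_cong[where x = x for x])
next
  case (Suc n)
  then show ?case by (simp add: fun_eq_iff composition_rule funpow_swap1)
qed

lemma asymp_transl_le:
  assumes "g \<in> carrier G" "n > 0"
  shows "asymp_transl G \<phi> g x \<le> ereal (dist z (\<phi> (g [^] n) z) / real n)"
  unfolding asymp_transl_def act_nat_pow[OF assms(1)]
  by (rule limsup_dist_funpow_le) (simp_all add: dist_act assms)

lemma dist_act_int_pow:
  assumes g: "g \<in> carrier G"
  shows "dist z (\<phi> (g [^] (m::int)) z) = dist z (\<phi> (g [^] nat \<bar>m\<bar>) z)"
proof (cases "m \<ge> 0")
  case True
  then show ?thesis by (simp add: int_pow_int[symmetric])
next
  case False
  define h where "h = g [^] nat \<bar>m\<bar>"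
  have h: "h \<in> carrier G" using g by (simp add: h_def)
  have m: "m = - int (nat \<bar>m\<bar>)" using False by simp
  have "g [^] m = inv h"
    unfolding h_def by (subst m) (rule int_pow_neg_int[OF g])
  then have "dist z (\<phi> (g [^] m) z) = dist (\<phi> h z) z"
    using dist_act[OF h, of z "\<phi> (inv h) z"] by (simp add: act_act_inv[OF h])
  then show ?thesis by (simp add: h_def dist_commute)
qed

lemma abs_mult_asymp_transl_le:
  assumes g: "g \<in> carrier G"
  shows "ereal \<bar>real_of_int m\<bar> * asymp_transl G \<phi> g x \<le> ereal (dist z (\<phi> (g [^] m) z))"
proof (cases "m = 0")
  case True
  then show ?thesis by (simp add: zero_ereal_def[symmetric])
next
  case False
  define n where "n = nat \<bar>m\<bar>"
  have n: "n > 0" "\<bar>real_of_int m\<bar> = real n" using False by (simp_all add: n_def)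
  have "ereal (real n) * asymp_transl G \<phi> g x \<le> ereal (real n) * ereal (dist z (\<phi> (g [^] n) z) / real n)"
    by (intro ereal_mult_left_mono asymp_transl_le g n) simp
  also have "\<dots> = ereal (dist z (\<phi> (g [^] m) z))"
    using n dist_act_int_pow[OF g, of z m] by (simp add: n_def)
  finally show ?thesis using n by simp
qed

end

locale path_system_action = path_system \<Gamma> \<mu> \<nu> + isometric_action G \<phi>
  for \<Gamma> :: "'x::metric_space rpath set" and \<mu> \<nu> :: real
    and G :: "('g, 'b) monoid_scheme" (structure) and \<phi> :: "'g \<Rightarrow> 'x \<Rightarrow> 'x" +
  assumes path_act: "h \<in> carrier G \<Longrightarrow> (a, b, \<alpha>) \<in> \<Gamma> \<Longrightarrow> (a, b, \<phi> h \<circ> \<alpha>) \<in> \<Gamma>"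
begin

lemma constricting_map_almost_equivariant:
  assumes cp: "constricting_map \<Gamma> \<delta> A \<pi>" and h: "h \<in> carrier G" and hA: "\<phi> h ` A = A"
  shows "dist (\<pi> (\<phi> h x)) (\<phi> h (\<pi> x)) \<le> (\<bar>\<mu>\<bar> + 4) * \<delta> + \<bar>\<nu>\<bar>"
proof -
  have "constricting_map \<Gamma> \<delta> A (\<phi> h \<circ> \<pi> \<circ> \<phi> (inv h))"
    using constricting_map_isometry_conj[OF cp dist_act[OF h] act_act_inv[OF h] act_inv_act[OF h] hA]
      path_act h by simp
  from constricting_maps_close[OF cp this, of "\<phi> h x"] show ?thesis
    by (simp add: act_inv_act[OF h])
qed

end

lemma path_system_group_path_system_action:
  "path_system_group \<mu> \<nu> G \<phi> \<Gamma> \<Longrightarrow> path_system_action \<Gamma> \<mu> \<nu> G \<phi>"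
  unfolding path_system_group_def proper_isometric_action_def path_system_action_def
    path_system_action_axioms_def path_system_def isometric_action_def isometric_action_axioms_def
  by blast

theorem mainTheorem17:
  fixes G :: "('g, 'b) monoid_scheme" and \<phi> :: "'g \<Rightarrow> 'x::metric_space \<Rightarrow> 'x"
    and \<Gamma> :: "'x rpath set" and \<mu> \<nu> \<delta> :: real and g :: 'g and A :: "'x set"
    and \<pi> :: "'x \<Rightarrow> 'x" and x0 :: 'x
  assumes "path_system_group \<mu> \<nu> G \<phi> \<Gamma>"
    and "constricting_element G \<phi> \<Gamma> \<delta> g A \<pi>"
  shows "\<exists>\<theta>\<ge>0. \<forall>x x'. \<forall>m::int.
           ereal (proj_dist \<pi> x (\<phi> (g [^]\<^bsub>G\<^esub> m) x'))
             \<ge> ereal \<bar>real_of_int m\<bar> * asymp_transl G \<phi> g x0 - ereal (proj_dist \<pi> x x') - ereal \<theta>"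
proof -
  interpret path_system_action \<Gamma> \<mu> \<nu> G \<phi>
    using path_system_group_path_system_action[OF assms(1)] .
  have g: "g \<in> carrier G" and A_inv: "\<phi> (g [^]\<^bsub>G\<^esub> m) ` A = A" and cp: "constricting_map \<Gamma> \<delta> A \<pi>"
    for m :: int
    using assms(2) unfolding constricting_element_def by blast+
  define \<theta> where "\<theta> = (\<bar>\<mu>\<bar> + 4) * \<delta> + \<bar>\<nu>\<bar>"
  have "ereal \<bar>real_of_int m\<bar> * asymp_transl G \<phi> g x0 - ereal (proj_dist \<pi> x x') - ereal \<theta>
      \<le> ereal (proj_dist \<pi> x (\<phi> (g [^]\<^bsub>G\<^esub> m) x'))" for x x' m
  proof -
    define h where "h = g [^]\<^bsub>G\<^esub> m"
    have "dist (\<pi> (\<phi> h x')) (\<phi> h (\<pi> x')) \<le> \<theta>"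
      unfolding \<theta>_def h_def using constricting_map_almost_equivariant[OF cp _ A_inv] g by simp
    then have triangle: "dist (\<pi> x') (\<phi> h (\<pi> x')) - proj_dist \<pi> x x' - \<theta> \<le> proj_dist \<pi> x (\<phi> h x')"
      using dist_triangle4[of "\<pi> x'" "\<phi> h (\<pi> x')" "\<pi> x" "\<pi> (\<phi> h x')"]
        dist_commute[of "\<pi> x'" "\<pi> x"] unfolding proj_dist_def by linarith
    have "ereal \<bar>real_of_int m\<bar> * asymp_transl G \<phi> g x0 \<le> ereal (dist (\<pi> x') (\<phi> h (\<pi> x')))"
      unfolding h_def by (rule abs_mult_asymp_transl_le[OF g])
    then have "ereal \<bar>real_of_int m\<bar> * asymp_transl G \<phi> g x0 - ereal (proj_dist \<pi> x x') - ereal \<theta>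
        \<le> ereal (dist (\<pi> x') (\<phi> h (\<pi> x'))) - ereal (proj_dist \<pi> x x') - ereal \<theta>"
      by (intro ereal_minus_mono order_refl)
    also have "\<dots> \<le> ereal (proj_dist \<pi> x (\<phi> h x'))"
      using triangle by simp
    finally show ?thesis unfolding h_def .
  qed
  moreover have "\<theta> \<ge> 0"
    using constricting_map_nonneg[OF cp] by (simp add: \<theta>_def)
  ultimately show ?thesis by auto
qed

end
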